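(* Let $A\in\mathbb{R}^{n\times n}$, let $W\in\mathbb{R}^{n\times n}$ be symmetric positive definite, let $C=\mathrm{diag}(C_{11},\dots,C_{nn})$ be diagonal positive definite and $V=\mathrm{diag}(\sigma_1^2,\dots,\sigma_n^2)$ with $\sigma_j>0$. Let $\Sigma$ be the unique positive semidefinite solution of $\Sigma=A\Sigma A^T-A\Sigma C^T(C\Sigma C^T+V)^{-1}C\Sigma A^T+W$, and let $\overline\Sigma=\Sigma-\Sigma C^T(C\Sigma C^T+V)^{-1}C\Sigma=(C^TV^{-1}C+\Sigma^{-1})^{-1}$ be the steady-state a posteriori error covariance of the Kalman filter. Then $$\frac{n\sigma_u^2}{C_u^2+\sigma_u^2\lambda_n^{-1}(W)}\le\mathrm{tr}\,\overline\Sigma\le n\frac{\sigma_l^2}{C_l^2}.$$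
   Context: $\lambda_n(\cdot)$ denotes the smallest eigenvalue. The indices $l,u$ are defined by $l=\arg\min_{1\le j\le n}C_{jj}^2/\sigma_j^2$ and $u=\arg\max_{1\le j\le n}C_{jj}^2/\sigma_j^2$, with $C_l:=C_{ll}$, $C_u:=C_{uu}$. *)

theory Defs
  imports "HOL-Analysis.Analysis"
begin

definition diag_mat :: "('n::finite \<Rightarrow> real) \<Rightarrow> real^'n^'n" where
  "diag_mat d = (\<chi> i j. if i = j then d i else 0)"

definition sym_mat :: "real^'n^'n \<Rightarrow> bool" where
  "sym_mat M \<longleftrightarrow> transpose M = M"

definition pos_def :: "real^'n^'n \<Rightarrow> bool" where
  "pos_def M \<longleftrightarrow> sym_mat M \<and> (\<forall>x. x \<noteq> 0 \<longrightarrow> x \<bullet> (M *v x) > 0)"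

definition pos_semidef :: "real^'n^'n \<Rightarrow> bool" where
  "pos_semidef M \<longleftrightarrow> sym_mat M \<and> (\<forall>x. x \<bullet> (M *v x) \<ge> 0)"

definition eigenvalues :: "real^'n^'n \<Rightarrow> real set" where
  "eigenvalues M = {e. \<exists>v. v \<noteq> 0 \<and> M *v v = e *\<^sub>R v}"

definition lambda_min :: "real^'n^'n \<Rightarrow> real" where
  "lambda_min M = Min (eigenvalues M)"

end

theory Submission
  imports Defs
begin

(* Completing the square in the innovation covariance S = C Sigma C^T + V gives
     x^T SigmaBar x = min_y (x - C^T y)^T Sigma (x - C^T y) + y^T V y,
   attained at y = S^-1 C Sigma x. For x = e_j and diagonal C, V the choice y = e_j / c_j yields
   SigmaBar_jj <= sigma_j^2 / c_j^2. Conversely, the Riccati equation reads Sigma = A SigmaBar A^T + W,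
   so Sigma >= W >= lambda_n(W) I; keeping only the j-th coordinates of the residual and of y leaves
   the scalar problem min_t lambda (1 - c_j t)^2 + sigma_j^2 t^2 = sigma_j^2 / (c_j^2 + sigma_j^2 / lambda).
   Summing over j and using the extreme ratios c_j^2 / sigma_j^2 bounds the trace. *)

lemma inner_sym_matrix_commute:
  assumes "sym_mat M"
  shows "x \<bullet> (M *v y) = y \<bullet> (M *v x)"
  using assms by (metis dot_lmul_matrix inner_commute sym_mat_def transpose_matrix_vector)

lemma transpose_add: "transpose (A + B) = transpose A + transpose B"
  by (simp add: transpose_def vec_eq_iff)

lemma matrix_inv_right:
  assumes "invertible A"
  shows "A ** matrix_inv A = mat 1"
  using assms unfolding invertible_def matrix_inv_def by (rule someI2_ex) blast

lemma vec_component_square_le_inner: "(v $ j)\<^sup>2 \<le> v \<bullet> (v :: real^'n)"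
  by (metis abs_le_square_iff abs_norm_cancel component_le_norm_cart dot_square_norm)

lemma diag_entry_eq_quadratic_form_axis: "M $ j $ j = axis j 1 \<bullet> (M *v axis j (1::real))"
  by (simp add: inner_axis' matrix_vector_mul_component inner_axis)

lemma transpose_diag_mat [simp]: "transpose (diag_mat d) = diag_mat d"
  by (simp add: diag_mat_def transpose_def vec_eq_iff)

lemma diag_mat_mult_vector: "diag_mat d *v x = (\<chi> i. d i * x $ i)"
  by (simp add: diag_mat_def matrix_vector_mult_def vec_eq_iff if_distrib if_distribR
      cong: if_cong)

lemma quadratic_form_diag_mat: "x \<bullet> (diag_mat d *v x) = (\<Sum>i\<in>UNIV. d i * (x $ i)\<^sup>2)"
  by (simp add: diag_mat_mult_vector inner_vec_def power2_eq_square algebra_simps)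

lemma pos_def_diag_mat:
  fixes d :: "'n::finite \<Rightarrow> real"
  assumes "\<And>i. d i > 0"
  shows "pos_def (diag_mat d)"
  unfolding pos_def_def sym_mat_def
proof (intro conjI allI impI)
  fix x :: "real^'n" assume "x \<noteq> 0"
  then obtain i where "x $ i \<noteq> 0" by (metis vec_eq_iff zero_index)
  then have "0 < d i * (x $ i)\<^sup>2" using assms by simp
  also have "\<dots> \<le> (\<Sum>i\<in>UNIV. d i * (x $ i)\<^sup>2)"
    by (rule member_le_sum) (auto intro!: mult_nonneg_nonneg simp: assms less_imp_le)
  finally show "0 < x \<bullet> (diag_mat d *v x)" by (simp add: quadratic_form_diag_mat)
qed simp

lemma pos_def_imp_pos_semidef: "pos_def M \<Longrightarrow> pos_semidef M"
  unfolding pos_def_def pos_semidef_def by (metis inner_zero_left order.refl less_imp_le)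

lemma pos_semidef_congruence:
  assumes "pos_semidef S"
  shows "pos_semidef (C ** S ** transpose C)"
  using assms unfolding pos_semidef_def sym_mat_def
  by (simp add: matrix_transpose_mul matrix_mul_assoc flip: matrix_vector_mul_assoc dot_lmul_matrix)

lemma pos_def_add_pos_semidef:
  assumes "pos_semidef S" "pos_def V"
  shows "pos_def (S + V)"
  using assms unfolding pos_def_def pos_semidef_def sym_mat_def
  by (simp add: transpose_add matrix_vector_mult_add_rdistrib inner_add_right add_nonneg_pos)

lemma pos_def_invertible:
  assumes "pos_def S"
  shows "invertible S"
  unfolding invertible_left_inverse matrix_left_invertible_ker
  using assms unfolding pos_def_def by (metis inner_zero_right less_irrefl)

lemma pos_semidef_form_zero_imp_kernel:
  assumes "pos_semidef M" and "x \<bullet> (M *v x) = 0"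
  shows "M *v x = 0"
proof -
  define r where "r = M *v x"
  have "0 \<le> (x - t *\<^sub>R r) \<bullet> (M *v (x - t *\<^sub>R r))" for t
    using assms(1) by (simp add: pos_semidef_def)
  also have "(x - t *\<^sub>R r) \<bullet> (M *v (x - t *\<^sub>R r))
      = t\<^sup>2 * (r \<bullet> (M *v r)) - 2 * t * (r \<bullet> r)" for t
    using assms inner_sym_matrix_commute[of M x r] unfolding pos_semidef_def r_def
    by (simp add: inner_commute power2_eq_square algebra_simps)
  finally have quad: "2 * t * (r \<bullet> r) \<le> t\<^sup>2 * (r \<bullet> (M *v r))" for t
    by simp
  show ?thesis
  proof (rule ccontr)
    assume "M *v x \<noteq> 0"
    then have rr: "0 < r \<bullet> r" by (simp add: r_def)
    define m where "m = r \<bullet> (M *v r)"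
    define t where "t = (r \<bullet> r) / (\<bar>m\<bar> + 1)"
    have t: "0 < t" using rr by (simp add: t_def)
    have "t * (2 * (r \<bullet> r)) \<le> t * (t * m)"
      using quad[of t] by (simp add: m_def power2_eq_square algebra_simps)
    then have "2 * (r \<bullet> r) \<le> t * m" using t by simp
    also have "t * m \<le> t * \<bar>m\<bar>" using t by (simp add: mult_left_mono)
    also have "t * \<bar>m\<bar> < r \<bullet> r"
      using rr by (simp add: t_def field_simps)
    finally show False using rr by simp
  qed
qed

lemma finite_eigenvalues:
  assumes "sym_mat M"
  shows "finite (eigenvalues M)"
proof -
  define v where "v e = (SOME v. v \<noteq> 0 \<and> M *v v = e *\<^sub>R v)" for e
  have v: "v e \<noteq> 0 \<and> M *v v e = e *\<^sub>R v e" if "e \<in> eigenvalues M" for e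
  proof -
    from that have "\<exists>v. v \<noteq> 0 \<and> M *v v = e *\<^sub>R v" by (simp add: eigenvalues_def)
    then show ?thesis unfolding v_def by (rule someI_ex)
  qed
  have "inj_on v (eigenvalues M)"
    by (rule inj_onI) (metis v scaleR_cancel_right)
  moreover have "pairwise orthogonal (v ` eigenvalues M)"
  proof (clarsimp simp: pairwise_def)
    fix e e' assume e: "e \<in> eigenvalues M" and e': "e' \<in> eigenvalues M" and "v e \<noteq> v e'"
    then have "e \<noteq> e'" by auto
    have "e * (v e \<bullet> v e') = v e' \<bullet> (M *v v e)" using v[OF e] by (simp add: inner_commute)
    also have "\<dots> = v e \<bullet> (M *v v e')" using assms by (rule inner_sym_matrix_commute)
    also have "\<dots> = e' * (v e \<bullet> v e')" using v[OF e'] by simp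
    finally show "orthogonal (v e) (v e')"
      using \<open>e \<noteq> e'\<close> unfolding orthogonal_def by (metis mult_right_cancel)
  qed
  moreover have "0 \<notin> v ` eigenvalues M" using v by auto
  ultimately show ?thesis
    using pairwise_orthogonal_independent independent_bound finite_imageD by blast
qed

lemma sym_mat_min_eigenvalue:
  fixes M :: "real^'n^'n"
  assumes "sym_mat M"
  shows "\<exists>\<mu>\<in>eigenvalues M. \<forall>x. \<mu> * (x \<bullet> x) \<le> x \<bullet> (M *v x)"
proof -
  define q where "q x = x \<bullet> (M *v x)" for x :: "real^'n"
  have "continuous_on (sphere 0 1) q"
    unfolding q_def by (intro continuous_intros linear_continuous_on matrix_vector_mul_bounded_linear)
  moreover have "axis undefined 1 \<in> sphere (0::real^'n) 1" by simp
  ultimately obtain x0 where x0: "x0 \<in> sphere 0 1"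
    and min: "\<And>y. y \<in> sphere 0 1 \<Longrightarrow> q x0 \<le> q y"
    using continuous_attains_inf[OF compact_sphere] by (metis empty_iff)
  define \<mu> where "\<mu> = q x0"
  have bound: "\<mu> * (x \<bullet> x) \<le> q x" for x
  proof (cases "x = 0")
    case False
    have "\<mu> \<le> q ((1 / norm x) *\<^sub>R x)" unfolding \<mu>_def using False by (intro min) simp
    also have "\<dots> = q x / (norm x)\<^sup>2" by (simp add: q_def matrix_vector_mult_scaleR power2_eq_square)
    finally show ?thesis using False by (simp add: field_simps dot_square_norm)
  qed (simp add: q_def)
  have "pos_semidef (M - \<mu> *\<^sub>R mat 1)"
    unfolding pos_semidef_def sym_mat_def
  proof
    show "transpose (M - \<mu> *\<^sub>R mat 1) = M - \<mu> *\<^sub>R mat 1"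
      using assms unfolding sym_mat_def by (simp add: transpose_def vec_eq_iff mat_def)
    show "\<forall>x. 0 \<le> x \<bullet> ((M - \<mu> *\<^sub>R mat 1) *v x)"
      using bound
      by (simp add: q_def matrix_vector_mult_diff_rdistrib inner_diff_right
          flip: scaleR_matrix_vector_assoc)
  qed
  moreover have "x0 \<bullet> ((M - \<mu> *\<^sub>R mat 1) *v x0) = 0"
    using x0 by (simp add: \<mu>_def q_def dot_square_norm matrix_vector_mult_diff_rdistrib
        inner_diff_right flip: scaleR_matrix_vector_assoc)
  ultimately have "M *v x0 = \<mu> *\<^sub>R x0"
    by (auto dest: pos_semidef_form_zero_imp_kernel
        simp: matrix_vector_mult_diff_rdistrib scaleR_matrix_vector_assoc[symmetric])
  moreover have "x0 \<noteq> 0" using x0 by auto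
  ultimately have "\<mu> \<in> eigenvalues M" unfolding eigenvalues_def by blast
  with bound show ?thesis unfolding q_def by blast
qed

lemma lambda_min_in_eigenvalues:
  fixes M :: "real^'n^'n"
  assumes "sym_mat M"
  shows "lambda_min M \<in> eigenvalues M"
  using sym_mat_min_eigenvalue[OF assms] finite_eigenvalues[OF assms]
  unfolding lambda_min_def by (auto intro: Min_in)

lemma lambda_min_le_form:
  fixes M :: "real^'n^'n"
  assumes "sym_mat M"
  shows "lambda_min M * (x \<bullet> x) \<le> x \<bullet> (M *v x)"
proof -
  obtain \<mu> where \<mu>: "\<mu> \<in> eigenvalues M" "\<And>x. \<mu> * (x \<bullet> x) \<le> x \<bullet> (M *v x)"
    using sym_mat_min_eigenvalue[OF assms] by blast
  have "lambda_min M \<le> \<mu>"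
    unfolding lambda_min_def using finite_eigenvalues[OF assms] \<mu>(1) by simp
  then have "lambda_min M * (x \<bullet> x) \<le> \<mu> * (x \<bullet> x)" by (simp add: mult_right_mono)
  also have "\<dots> \<le> x \<bullet> (M *v x)" by (rule \<mu>(2))
  finally show ?thesis .
qed

lemma lambda_min_pos:
  fixes M :: "real^'n^'n"
  assumes "pos_def M"
  shows "0 < lambda_min M"
proof -
  have "sym_mat M" using assms by (simp add: pos_def_def)
  then obtain v where v: "v \<noteq> 0" "M *v v = lambda_min M *\<^sub>R v"
    using lambda_min_in_eigenvalues unfolding eigenvalues_def by blast
  have "0 < v \<bullet> (M *v v)" using assms v(1) by (simp add: pos_def_def)
  then have "0 < lambda_min M * (v \<bullet> v)" using v(2) by simp
  moreover have "0 < v \<bullet> v" using v(1) by simp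
  ultimately show ?thesis by (simp add: zero_less_mult_iff)
qed

definition kalman_posterior :: "real^'n^'n \<Rightarrow> real^'n^'m \<Rightarrow> real^'m^'m \<Rightarrow> real^'n^'n" where
  "kalman_posterior P C V =
     P - P ** transpose C ** matrix_inv (C ** P ** transpose C + V) ** C ** P"

lemma kalman_posterior_completion_of_squares:
  fixes P :: "real^'n^'n" and C :: "real^'n^'m" and V :: "real^'m^'m"
    and x :: "real^'n" and y :: "real^'m"
  defines "S \<equiv> C ** P ** transpose C + V"
  defines "y0 \<equiv> matrix_inv S *v (C *v (P *v x))"
  assumes P: "sym_mat P" and V: "sym_mat V" and S_inv: "invertible S"
  shows "x \<bullet> (kalman_posterior P C V *v x) + (y - y0) \<bullet> (S *v (y - y0))
       = (x - transpose C *v y) \<bullet> (P *v (x - transpose C *v y)) + y \<bullet> (V *v y)"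
proof -
  define z where "z = C *v (P *v x)"
  have S_y0: "S *v y0 = z"
    unfolding y0_def z_def[symmetric] by (simp add: matrix_vector_mul_assoc matrix_inv_right[OF S_inv])
  have "sym_mat S"
    using P V unfolding S_def sym_mat_def by (simp add: transpose_add matrix_transpose_mul matrix_mul_assoc)
  then have S_comm: "y0 \<bullet> (S *v y) = y \<bullet> z"
    using S_y0 by (metis inner_sym_matrix_commute)
  have P_comm: "u \<bullet> (P *v x) = x \<bullet> (P *v u)" for u
    using P by (rule inner_sym_matrix_commute)
  have S_form: "y \<bullet> (S *v y) = (transpose C *v y) \<bullet> (P *v (transpose C *v y)) + y \<bullet> (V *v y)"
    by (simp add: S_def matrix_vector_mult_add_rdistrib inner_add_right dot_lmul_matrix
        flip: matrix_vector_mul_assoc)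
  have "x \<bullet> (kalman_posterior P C V *v x) = x \<bullet> (P *v x) - x \<bullet> (P *v (transpose C *v y0))"
    by (simp add: kalman_posterior_def S_def[symmetric] y0_def matrix_vector_mult_diff_rdistrib
        inner_diff_right del: transpose_matrix_vector flip: matrix_vector_mul_assoc)
  also have "x \<bullet> (P *v (transpose C *v y0)) = (transpose C *v y0) \<bullet> (P *v x)"
    by (rule P_comm[symmetric])
  also have "\<dots> = y0 \<bullet> z"
    by (simp add: z_def dot_lmul_matrix)
  finally have "x \<bullet> (kalman_posterior P C V *v x) = x \<bullet> (P *v x) - y0 \<bullet> z" .
  moreover have "(y - y0) \<bullet> (S *v (y - y0)) = y \<bullet> (S *v y) - 2 * (y \<bullet> z) + y0 \<bullet> z"
    using S_comm S_y0 by (simp add: matrix_vector_mult_diff_distrib inner_diff_left inner_diff_right)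
  moreover have "(transpose C *v y) \<bullet> (P *v x) = y \<bullet> z"
    by (simp add: z_def dot_lmul_matrix)
  ultimately show ?thesis
    using S_form P_comm[of "transpose C *v y"]
    by (simp add: matrix_vector_mult_diff_distrib inner_diff_left inner_diff_right inner_commute)
qed

lemma innovation_pos_def:
  assumes "pos_semidef P" and "pos_def V"
  shows "pos_def (C ** P ** transpose C + V)"
  using assms by (intro pos_def_add_pos_semidef pos_semidef_congruence)

lemma kalman_posterior_form_le:
  fixes C :: "real^'n^'m"
  assumes P: "pos_semidef P" and V: "pos_def V"
  shows "x \<bullet> (kalman_posterior P C V *v x)
       \<le> (x - transpose C *v y) \<bullet> (P *v (x - transpose C *v y)) + y \<bullet> (V *v y)"
proof -
  define S where "S = C ** P ** transpose C + V"
  define y0 where "y0 = matrix_inv S *v (C *v (P *v x))"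
  have S: "pos_def S" unfolding S_def using assms by (rule innovation_pos_def)
  have "x \<bullet> (kalman_posterior P C V *v x) + (y - y0) \<bullet> (S *v (y - y0))
       = (x - transpose C *v y) \<bullet> (P *v (x - transpose C *v y)) + y \<bullet> (V *v y)"
    unfolding S_def y0_def using P V pos_def_invertible[OF S]
    by (intro kalman_posterior_completion_of_squares) (auto simp: S_def pos_def_def pos_semidef_def)
  moreover have "0 \<le> (y - y0) \<bullet> (S *v (y - y0))"
    using pos_def_imp_pos_semidef[OF S] by (simp add: pos_semidef_def)
  ultimately show ?thesis by linarith
qed

lemma kalman_posterior_form_attained:
  fixes C :: "real^'n^'m"
  assumes P: "pos_semidef P" and V: "pos_def V"
  obtains y where "x \<bullet> (kalman_posterior P C V *v x)
       = (x - transpose C *v y) \<bullet> (P *v (x - transpose C *v y)) + y \<bullet> (V *v y)"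
proof -
  define y0 where "y0 = matrix_inv (C ** P ** transpose C + V) *v (C *v (P *v x))"
  have "invertible (C ** P ** transpose C + V)"
    using assms by (intro pos_def_invertible innovation_pos_def)
  then show ?thesis
    using kalman_posterior_completion_of_squares[of P V C x y0] P V that
    unfolding pos_def_def pos_semidef_def y0_def by simp
qed

lemma kalman_posterior_form_nonneg:
  assumes P: "pos_semidef P" and V: "pos_def V"
  shows "0 \<le> x \<bullet> (kalman_posterior P C V *v x)"
proof -
  obtain y where "x \<bullet> (kalman_posterior P C V *v x)
       = (x - transpose C *v y) \<bullet> (P *v (x - transpose C *v y)) + y \<bullet> (V *v y)"
    using kalman_posterior_form_attained[OF assms] .
  also have "0 \<le> \<dots>"
    using P pos_def_imp_pos_semidef[OF V] unfolding pos_semidef_def by (simp add: add_nonneg_nonneg)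
  finally show ?thesis .
qed

lemma riccati_solution_form_ge:
  assumes P: "pos_semidef P" and V: "pos_def V"
    and riccati: "P = A ** P ** transpose A
        - A ** P ** transpose C ** matrix_inv (C ** P ** transpose C + V) ** C ** P ** transpose A + W"
  shows "x \<bullet> (W *v x) \<le> x \<bullet> (P *v x)"
proof -
  have "P *v x = A *v (kalman_posterior P C V *v (transpose A *v x)) + W *v x"
    by (subst riccati) (simp add: kalman_posterior_def matrix_vector_mult_add_rdistrib
        matrix_vector_mult_diff_rdistrib matrix_vector_mult_diff_distrib
        del: transpose_matrix_vector flip: matrix_vector_mul_assoc)
  then have "x \<bullet> (P *v x)
      = (transpose A *v x) \<bullet> (kalman_posterior P C V *v (transpose A *v x)) + x \<bullet> (W *v x)"
    by (simp add: inner_add_right dot_lmul_matrix)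
  then show ?thesis
    using kalman_posterior_form_nonneg[OF P V, where C = C and x = "transpose A *v x"] by linarith
qed

lemma weighted_squares_ge:
  fixes a s c y :: real
  assumes "0 < a" and "0 < s"
  shows "s / (c\<^sup>2 + s / a) \<le> a * (1 - c * y)\<^sup>2 + s * y\<^sup>2"
proof -
  have pos: "0 < a * c\<^sup>2 + s" using assms by (simp add: add_nonneg_pos)
  have "(a * c\<^sup>2 + s) * (a * (1 - c * y)\<^sup>2 + s * y\<^sup>2) - a * s
      = (a * c * (1 - c * y) - s * y)\<^sup>2"
    by (simp add: power2_eq_square algebra_simps)
  then have "a * s \<le> (a * c\<^sup>2 + s) * (a * (1 - c * y)\<^sup>2 + s * y\<^sup>2)"
    by (metis diff_ge_0_iff_ge zero_le_power2)
  moreover have "s / (c\<^sup>2 + s / a) = a * s / (a * c\<^sup>2 + s)" using assms by (simp add: field_simps)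
  ultimately show ?thesis using pos by (simp add: divide_le_eq mult.commute)
qed

lemma scalar_posterior_variance_antimono:
  fixes lam s s' c c' :: real
  assumes "0 < lam" and "0 < s" and "0 < s'" and "c\<^sup>2 / s \<le> c'\<^sup>2 / s'"
  shows "s' / (c'\<^sup>2 + s' / lam) \<le> s / (c\<^sup>2 + s / lam)"
proof -
  have inverse_form: "t / (d\<^sup>2 + t / lam) = 1 / (d\<^sup>2 / t + 1 / lam)" if "0 < t" for t d
    using that assms(1) by (simp add: field_simps)
  have "0 < c\<^sup>2 / s + 1 / lam" using assms(1,2) by (simp add: add_nonneg_pos)
  then show ?thesis
    unfolding inverse_form[OF assms(2)] inverse_form[OF assms(3)] using assms(4)
    by (intro divide_left_mono) auto
qed

lemma kalman_posterior_diag_le: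
  fixes P :: "real^'n^'n" and c sigma :: "'n \<Rightarrow> real"
  assumes P: "pos_semidef P" and sigma: "\<And>i. 0 < sigma i" and c: "c j \<noteq> 0"
  shows "kalman_posterior P (diag_mat c) (diag_mat (\<lambda>i. (sigma i)\<^sup>2)) $ j $ j
       \<le> (sigma j)\<^sup>2 / (c j)\<^sup>2"
proof -
  define y :: "real^'n" where "y = axis j (1 / c j)"
  have V: "pos_def (diag_mat (\<lambda>i. (sigma i)\<^sup>2))"
    by (intro pos_def_diag_mat zero_less_power sigma)
  have "kalman_posterior P (diag_mat c) (diag_mat (\<lambda>i. (sigma i)\<^sup>2)) $ j $ j
      \<le> (axis j 1 - transpose (diag_mat c) *v y) \<bullet> (P *v (axis j 1 - transpose (diag_mat c) *v y))
        + y \<bullet> (diag_mat (\<lambda>i. (sigma i)\<^sup>2) *v y)"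
    unfolding diag_entry_eq_quadratic_form_axis by (rule kalman_posterior_form_le[OF P V])
  also have "transpose (diag_mat c) *v y = axis j 1"
    using c by (simp add: diag_mat_mult_vector y_def vec_eq_iff axis_def)
  also have "y \<bullet> (diag_mat (\<lambda>i. (sigma i)\<^sup>2) *v y) = (sigma j)\<^sup>2 / (c j)\<^sup>2"
    by (simp add: quadratic_form_diag_mat y_def axis_def power2_eq_square if_distrib if_distribR
        cong: if_cong)
  finally show ?thesis by simp
qed

lemma kalman_posterior_diag_ge:
  fixes P :: "real^'n^'n" and c sigma :: "'n \<Rightarrow> real"
  assumes P: "pos_semidef P" and sigma: "\<And>i. 0 < sigma i"
    and lam: "0 < lam" and P_ge: "\<And>x. lam * (x \<bullet> x) \<le> x \<bullet> (P *v x)"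
  shows "(sigma j)\<^sup>2 / ((c j)\<^sup>2 + (sigma j)\<^sup>2 / lam)
       \<le> kalman_posterior P (diag_mat c) (diag_mat (\<lambda>i. (sigma i)\<^sup>2)) $ j $ j"
proof -
  have "pos_def (diag_mat (\<lambda>i. (sigma i)\<^sup>2))"
    by (intro pos_def_diag_mat zero_less_power sigma)
  then obtain y where y: "kalman_posterior P (diag_mat c) (diag_mat (\<lambda>i. (sigma i)\<^sup>2)) $ j $ j
      = (axis j 1 - transpose (diag_mat c) *v y) \<bullet> (P *v (axis j 1 - transpose (diag_mat c) *v y))
        + y \<bullet> (diag_mat (\<lambda>i. (sigma i)\<^sup>2) *v y)"
    using kalman_posterior_form_attained[OF P] unfolding diag_entry_eq_quadratic_form_axis by metis
  define r where "r = axis j 1 - transpose (diag_mat c) *v y"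
  have "lam * (1 - c j * y $ j)\<^sup>2 \<le> lam * (r \<bullet> r)"
    using lam vec_component_square_le_inner[of r j] by (simp add: r_def diag_mat_mult_vector)
  also have "\<dots> \<le> r \<bullet> (P *v r)"
    by (rule P_ge)
  finally have "lam * (1 - c j * y $ j)\<^sup>2 \<le> r \<bullet> (P *v r)" .
  moreover have "(sigma j)\<^sup>2 * (y $ j)\<^sup>2 \<le> y \<bullet> (diag_mat (\<lambda>i. (sigma i)\<^sup>2) *v y)"
    unfolding quadratic_form_diag_mat by (rule member_le_sum) auto
  moreover have "(sigma j)\<^sup>2 / ((c j)\<^sup>2 + (sigma j)\<^sup>2 / lam)
      \<le> lam * (1 - c j * y $ j)\<^sup>2 + (sigma j)\<^sup>2 * (y $ j)\<^sup>2"
    using lam sigma[of j] by (intro weighted_squares_ge) auto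
  ultimately show ?thesis unfolding y r_def by linarith
qed

theorem theorem3:
  fixes A W Sigma :: "real^'n^'n"
    and c sigma :: "'n \<Rightarrow> real"
    and l u :: 'n
  assumes W_pd: "pos_def W"
    and c_pos: "\<And>j. c j > 0"
    and sigma_pos: "\<And>j. sigma j > 0"
    and l_argmin: "\<And>j. (c l)\<^sup>2 / (sigma l)\<^sup>2 \<le> (c j)\<^sup>2 / (sigma j)\<^sup>2"
    and u_argmax: "\<And>j. (c j)\<^sup>2 / (sigma j)\<^sup>2 \<le> (c u)\<^sup>2 / (sigma u)\<^sup>2"
    and Sigma_psd: "pos_semidef Sigma"
    and DARE: "Sigma = A ** Sigma ** transpose A
        - A ** Sigma ** transpose (diag_mat c)
          ** matrix_inv (diag_mat c ** Sigma ** transpose (diag_mat c) + diag_mat (\<lambda>j. (sigma j)\<^sup>2))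
          ** diag_mat c ** Sigma ** transpose A + W"
  shows "let C = diag_mat c; V = diag_mat (\<lambda>j. (sigma j)\<^sup>2);
             SigmaBar = Sigma - Sigma ** transpose C ** matrix_inv (C ** Sigma ** transpose C + V) ** C ** Sigma
         in real CARD('n) * (sigma u)\<^sup>2 / ((c u)\<^sup>2 + (sigma u)\<^sup>2 / lambda_min W) \<le> trace SigmaBar
          \<and> trace SigmaBar \<le> real CARD('n) * ((sigma l)\<^sup>2 / (c l)\<^sup>2)"
proof -
  define V where "V = diag_mat (\<lambda>j. (sigma j)\<^sup>2)"
  define SigmaBar where "SigmaBar = kalman_posterior Sigma (diag_mat c) V"
  define lam where "lam = lambda_min W"
  have V: "pos_def V" unfolding V_def by (intro pos_def_diag_mat zero_less_power sigma_pos)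
  have lam: "0 < lam" unfolding lam_def using W_pd by (rule lambda_min_pos)
  have Sigma_ge: "lam * (x \<bullet> x) \<le> x \<bullet> (Sigma *v x)" for x
    using lambda_min_le_form[of W x] riccati_solution_form_ge[OF Sigma_psd V DARE[folded V_def]] W_pd
    unfolding lam_def pos_def_def by (meson order_trans)
  have lower: "(sigma u)\<^sup>2 / ((c u)\<^sup>2 + (sigma u)\<^sup>2 / lam) \<le> SigmaBar $ j $ j" for j
  proof -
    have "(sigma u)\<^sup>2 / ((c u)\<^sup>2 + (sigma u)\<^sup>2 / lam)
        \<le> (sigma j)\<^sup>2 / ((c j)\<^sup>2 + (sigma j)\<^sup>2 / lam)"
      using lam sigma_pos[of j] sigma_pos[of u] u_argmax[of j]
      by (intro scalar_posterior_variance_antimono) auto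
    also have "\<dots> \<le> SigmaBar $ j $ j"
      unfolding SigmaBar_def V_def using Sigma_psd sigma_pos lam Sigma_ge
      by (rule kalman_posterior_diag_ge)
    finally show ?thesis .
  qed
  have upper: "SigmaBar $ j $ j \<le> (sigma l)\<^sup>2 / (c l)\<^sup>2" for j
  proof -
    have "SigmaBar $ j $ j \<le> (sigma j)\<^sup>2 / (c j)\<^sup>2"
      unfolding SigmaBar_def V_def using Sigma_psd sigma_pos
      by (rule kalman_posterior_diag_le) (use c_pos[of j] in simp)
    also have "\<dots> \<le> (sigma l)\<^sup>2 / (c l)\<^sup>2"
      using le_imp_inverse_le[OF l_argmin[of j]] c_pos[of l] sigma_pos[of l] by simp
    finally show ?thesis .
  qed
  have "real CARD('n) * ((sigma u)\<^sup>2 / ((c u)\<^sup>2 + (sigma u)\<^sup>2 / lam)) \<le> trace SigmaBar"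
    unfolding trace_def by (rule sum_bounded_below) (rule lower)
  moreover have "trace SigmaBar \<le> real CARD('n) * ((sigma l)\<^sup>2 / (c l)\<^sup>2)"
    unfolding trace_def by (rule sum_bounded_above) (rule upper)
  ultimately show ?thesis unfolding Let_def SigmaBar_def V_def lam_def kalman_posterior_def by simp
qed

end
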